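(* Fix an attacker label $A\in\mathcal{L}$. For all labels $pc\in\mathcal{L}$, all initial configurations $c_1=\langle\Sigma_1,e_1\rangle$, $c_2=\langle\Sigma_2,e_2\rangle$ of $\lambda^{dFG}$, all environments $\theta_1,\theta_2$ and all final configurations $c_1',c_2'$: if $c_1\Downarrow^{\theta_1}_{pc} c_1'$, $c_2\Downarrow^{\theta_2}_{pc} c_2'$, $\theta_1\approx_A\theta_2$ and $c_1\approx_A c_2$, then $c_1'\approx_A c_2'$.
   Context: Fix a lattice $(\mathcal{L},\sqsubseteq,\sqcup)$ of security labels. The fine-grained calculus $\lambda^{dFG}$ has types $\tau::=\mathbf{unit}\mid\tau_1\to\tau_2\mid\tau_1+\tau_2\mid\tau_1\times\tau_2\mid\mathcal{L}\mid\mathbf{Ref}\,\tau$ (with a standard simple type system), expressions $e::=x\mid\lambda x.e\mid e_1\,e_2\mid()\mid\ell\mid(e_1,e_2)\mid\mathbf{fst}(e)\mid\mathbf{snd}(e)\mid\mathbf{inl}(e)\mid\mathbf{inr}(e)\mid\mathbf{case}(e,x.e_1,x.e_2)\mid\mathbf{getLabel}\mid\mathbf{labelOf}(e)\mid e_1\sqsubseteq^{?}e_2\mid\mathbf{taint}(e_1,e_2)\mid\mathbf{new}(e)\mid\,!e\mid e_1:=e_2\mid\mathbf{labelOfRef}(e)$, raw values $r::=()\mid(x.e,\theta)\mid\mathbf{inl}(v)\mid\mathbf{inr}(v)\mid(v_1,v_2)\mid\ell\mid n_\ell$ ($n\in\mathbb{N}$, $\ell\in\mathcal{L}$), values $v::=r^{\ell}$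 (raw value tagged by a label), and environments $\theta$ = finite maps from variables to values. For $v=r^{\ell}$ write $v\sqcup\ell'$ for $r^{\ell\sqcup\ell'}$. A memory is a finite list $M$ of raw values with length $|M|$, entries $M[n]$ ($n\ge 0$), and $M[n\mapsto r]$ the list with entry $n$ replaced by $r$ (or $r$ appended if $n=|M|$). A store $\Sigma$ assigns a memory $\Sigma(\ell)$ to every label $\ell$; $\Sigma[\ell\mapsto M]$ is the updated store. Evaluation $\langle\Sigma,e\rangle\Downarrow^{\theta}_{pc}\langle\Sigma',v\rangle$ is the least relation closed under the following rules; below "$e\Downarrow v$" means evaluation in the current $\theta$ and $pc$ unless said otherwise, the store is threaded through premises from left to right, the resulting store is that of the last premise, and rules without premises leave the store unchanged. (Var) $x\Downarrow\theta(x)\sqcup pc$. (Unit) $()\Downarrow()^{pc}$. (Label) $\ell\Downarrow\ell^{pc}$. (Fun) $\lambda x.e\Downarrow(x.e,\theta)^{pc}$. (GetLabel) $\mathbf{getLabel}\Downarrow pc^{pc}$. (App) if $e_1\Downarrow(x.e,\theta')^{\ell}$, $e_2\Downarrow v_2$, and $e$ evaluates to $v$ in environment $\theta'[x\mapsto v_2]$ with program counter $pc\sqcup\ell$, then $e_1\,e_2\Downarrow v$. (Inl/Inr) if $e\Downarrow v$ then $\mathbf{inl}(e)\Downarrow\mathbf{inl}(v)^{pc}$, $\mathbf{inr}(e)\Downarrow\mathbf{inr}(v)^{pc}$. (Case) if $e\Downarrow\mathbf{inl}(v_1)^{\ell}$ and $e_1$ evaluates to $v$ in $\theta[x\mapsto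 v_1]$ with program counter $pc\sqcup\ell$ then $\mathbf{case}(e,x.e_1,x.e_2)\Downarrow v$; symmetrically with $\mathbf{inr}(v_2)^{\ell}$ and $e_2$. (Pair) if $e_1\Downarrow v_1$, $e_2\Downarrow v_2$ then $(e_1,e_2)\Downarrow(v_1,v_2)^{pc}$. (Fst/Snd) if $e\Downarrow(v_1,v_2)^{\ell}$ then $\mathbf{fst}(e)\Downarrow v_1\sqcup\ell$ and $\mathbf{snd}(e)\Downarrow v_2\sqcup\ell$. (LabelOf) if $e\Downarrow r^{\ell}$ then $\mathbf{labelOf}(e)\Downarrow\ell^{\ell}$. (Compare) if $e_1\Downarrow\ell_1^{\ell_1'}$ and $e_2\Downarrow\ell_2^{\ell_2'}$ then $e_1\sqsubseteq^{?}e_2\Downarrow\mathbf{inl}(()^{pc})^{\ell_1'\sqcup\ell_2'}$ if $\ell_1\sqsubseteq\ell_2$, and $\Downarrow\mathbf{inr}(()^{pc})^{\ell_1'\sqcup\ell_2'}$ otherwise. (Taint) if $e_1\Downarrow\ell^{\ell'}$ with $\ell'\sqsubseteq\ell$, and $e_2$ evaluates to $v$ with program counter $\ell$, then $\mathbf{taint}(e_1,e_2)\Downarrow v$. (New) if $e\Downarrow r^{\ell}$ with resulting store $\Sigma'$ and $n=|\Sigma'(\ell)|$, then $\mathbf{new}(e)\Downarrow(n_\ell)^{pc}$ with final store $\Sigma'[\ell\mapsto\Sigma'(\ell)[n\mapsto r]]$. (Read) if $e\Downarrow(n_\ell)^{\ell'}$ with resulting store $\Sigma'$ and $\Sigma'(\ell)[n]=r$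 then $!e\Downarrow r^{\ell\sqcup\ell'}$. (Write) if $e_1\Downarrow(n_\ell)^{\ell_1}$ with $\ell_1\sqsubseteq\ell$ and $e_2\Downarrow r^{\ell_2}$ with resulting store $\Sigma''$ and $\ell_2\sqsubseteq\ell$, then $e_1:=e_2\Downarrow()^{pc}$ with final store $\Sigma''[\ell\mapsto\Sigma''(\ell)[n\mapsto r]]$. (LabelOfRef) if $e\Downarrow(n_\ell)^{\ell'}$ then $\mathbf{labelOfRef}(e)\Downarrow\ell^{\ell\sqcup\ell'}$. Initial configurations are $\langle\Sigma,e\rangle$, final ones $\langle\Sigma,v\rangle$; $c\Downarrow^{\theta}_{pc}c'$ denotes the evaluation relation. $A$-equivalence ($\approx_A$), defined mutually on values and raw values: $r_1^{\ell}\approx_A r_2^{\ell}$ if $\ell\sqsubseteq A$ and $r_1\approx_A r_2$; $r_1^{\ell_1}\approx_A r_2^{\ell_2}$ whenever $\ell_1\not\sqsubseteq A$ and $\ell_2\not\sqsubseteq A$; $()\approx_A()$; $\ell\approx_A\ell$; $(x.e_1,\theta_1)\approx_A(x.e_2,\theta_2)$ if $e_1,e_2$ are $\alpha$-equivalent and $\theta_1\approx_A\theta_2$; $\mathbf{inl}(v_1)\approx_A\mathbf{inl}(v_2)$ and $\mathbf{inr}(v_1)\approx_A\mathbf{inr}(v_2)$ if $v_1\approx_A v_2$; $(v_1,v_2)\approx_A(v_1',v_2')$ if $v_1\approx_A v_1'$ and $v_2\approx_A v_2'$; $n_\ell\approx_A n_\ell$ if $\ell\sqsubseteq A$; $(n_1)_{\ell_1}\approx_A(n_2)_{\ell_2}$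 if $\ell_1,\ell_2\not\sqsubseteq A$. Environments: $\theta_1\approx_A\theta_2$ iff same domain and pointwise related. Memories $M_1,M_2$ stored at label $\ell$: always related if $\ell\not\sqsubseteq A$; if $\ell\sqsubseteq A$, related iff $|M_1|=|M_2|$ and $M_1[n]\approx_A M_2[n]$ for all $n$. Stores: $\Sigma_1\approx_A\Sigma_2$ iff $\Sigma_1(\ell)\approx_A\Sigma_2(\ell)$ for all $\ell$. Initial configurations: $\langle\Sigma_1,e_1\rangle\approx_A\langle\Sigma_2,e_2\rangle$ iff $\Sigma_1\approx_A\Sigma_2$ and $e_1,e_2$ are $\alpha$-equivalent; final configurations: $\langle\Sigma_1,v_1\rangle\approx_A\langle\Sigma_2,v_2\rangle$ iff $\Sigma_1\approx_A\Sigma_2$ and $v_1\approx_A v_2$. *)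

theory Defs
  imports Main
begin

text \<open>Variables are represented by de Bruijn indices, so alpha-equivalence of expressions is
  syntactic equality; environments are lists of values (index i is looked up as theta ! i).\<close>

datatype 'l expr =
    Var nat
  | Lam "'l expr"                       (* lambda x. e, body under one binder *)
  | App "'l expr" "'l expr"
  | UnitE
  | LabE 'l
  | PairE "'l expr" "'l expr"
  | Fst "'l expr"
  | Snd "'l expr"
  | InlE "'l expr"
  | InrE "'l expr"
  | Case "'l expr" "'l expr" "'l expr"  (* case(e, x.e1, x.e2); e1,e2 under one binder *)
  | GetLabel
  | LabelOf "'l expr"
  | Cmp "'l expr" "'l expr"
  | Taint "'l expr" "'l expr"
  | New "'l expr"
  | Read "'l expr"
  | Write "'l expr" "'l expr"
  | LabelOfRef "'l expr"

datatype 'l raw =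
    RUnit
  | RClo "'l expr" "'l val list"
  | RInl "'l val"
  | RInr "'l val"
  | RPair "'l val" "'l val"
  | RLab 'l
  | RRef nat 'l
and 'l val = V "'l raw" 'l

type_synonym 'l env = "'l val list"
type_synonym 'l mem = "'l raw list"
type_synonym 'l store = "'l \<Rightarrow> 'l mem"

fun join_val :: "'l::lattice val \<Rightarrow> 'l \<Rightarrow> 'l val" where
  "join_val (V r l) l' = V r (sup l l')"

definition mem_upd :: "'l mem \<Rightarrow> nat \<Rightarrow> 'l raw \<Rightarrow> 'l mem" where
  "mem_upd M n r = (if n < length M then M[n := r] else M @ [r])"

text \<open>eval S theta pc e S' v  means  <S,e> \<Down>^theta_pc <S',v>.\<close>
inductive eval :: "'l::lattice store \<Rightarrow> 'l env \<Rightarrow> 'l \<Rightarrow> 'l expr \<Rightarrow> 'l store \<Rightarrow> 'l val \<Rightarrow> bool" where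
  EVar: "x < length \<theta> \<Longrightarrow> eval S \<theta> pc (Var x) S (join_val (\<theta> ! x) pc)"
| EUnit: "eval S \<theta> pc UnitE S (V RUnit pc)"
| ELab: "eval S \<theta> pc (LabE l) S (V (RLab l) pc)"
| EFun: "eval S \<theta> pc (Lam e) S (V (RClo e \<theta>) pc)"
| EGetLabel: "eval S \<theta> pc GetLabel S (V (RLab pc) pc)"
| EApp: "\<lbrakk> eval S \<theta> pc e1 S1 (V (RClo e \<theta>') l);
           eval S1 \<theta> pc e2 S2 v2;
           eval S2 (v2 # \<theta>') (sup pc l) e S3 v \<rbrakk>
        \<Longrightarrow> eval S \<theta> pc (App e1 e2) S3 v"
| EInl: "eval S \<theta> pc e S1 v \<Longrightarrow> eval S \<theta> pc (InlE e) S1 (V (RInl v) pc)"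
| EInr: "eval S \<theta> pc e S1 v \<Longrightarrow> eval S \<theta> pc (InrE e) S1 (V (RInr v) pc)"
| ECaseL: "\<lbrakk> eval S \<theta> pc e S1 (V (RInl v1) l);
             eval S1 (v1 # \<theta>) (sup pc l) e1 S2 v \<rbrakk>
          \<Longrightarrow> eval S \<theta> pc (Case e e1 e2) S2 v"
| ECaseR: "\<lbrakk> eval S \<theta> pc e S1 (V (RInr v2) l);
             eval S1 (v2 # \<theta>) (sup pc l) e2 S2 v \<rbrakk>
          \<Longrightarrow> eval S \<theta> pc (Case e e1 e2) S2 v"
| EPair: "\<lbrakk> eval S \<theta> pc e1 S1 v1; eval S1 \<theta> pc e2 S2 v2 \<rbrakk>
          \<Longrightarrow> eval S \<theta> pc (PairE e1 e2) S2 (V (RPair v1 v2) pc)"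
| EFst: "eval S \<theta> pc e S1 (V (RPair v1 v2) l) \<Longrightarrow> eval S \<theta> pc (Fst e) S1 (join_val v1 l)"
| ESnd: "eval S \<theta> pc e S1 (V (RPair v1 v2) l) \<Longrightarrow> eval S \<theta> pc (Snd e) S1 (join_val v2 l)"
| ELabelOf: "eval S \<theta> pc e S1 (V r l) \<Longrightarrow> eval S \<theta> pc (LabelOf e) S1 (V (RLab l) l)"
| ECmpT: "\<lbrakk> eval S \<theta> pc e1 S1 (V (RLab l1) l1'); eval S1 \<theta> pc e2 S2 (V (RLab l2) l2');
            l1 \<le> l2 \<rbrakk>
          \<Longrightarrow> eval S \<theta> pc (Cmp e1 e2) S2 (V (RInl (V RUnit pc)) (sup l1' l2'))"
| ECmpF: "\<lbrakk> eval S \<theta> pc e1 S1 (V (RLab l1) l1'); eval S1 \<theta> pc e2 S2 (V (RLab l2) l2');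
            \<not> l1 \<le> l2 \<rbrakk>
          \<Longrightarrow> eval S \<theta> pc (Cmp e1 e2) S2 (V (RInr (V RUnit pc)) (sup l1' l2'))"
| ETaint: "\<lbrakk> eval S \<theta> pc e1 S1 (V (RLab l) l'); l' \<le> l; eval S1 \<theta> l e2 S2 v \<rbrakk>
          \<Longrightarrow> eval S \<theta> pc (Taint e1 e2) S2 v"
| ENew: "\<lbrakk> eval S \<theta> pc e S1 (V r l); n = length (S1 l) \<rbrakk>
          \<Longrightarrow> eval S \<theta> pc (New e) (S1(l := mem_upd (S1 l) n r)) (V (RRef n l) pc)"
| ERead: "\<lbrakk> eval S \<theta> pc e S1 (V (RRef n l) l'); n < length (S1 l); S1 l ! n = r \<rbrakk>
          \<Longrightarrow> eval S \<theta> pc (Read e) S1 (V r (sup l l'))"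
| EWrite: "\<lbrakk> eval S \<theta> pc e1 S1 (V (RRef n l) l1); l1 \<le> l;
             eval S1 \<theta> pc e2 S2 (V r l2); l2 \<le> l; n \<le> length (S2 l) \<rbrakk>
          \<Longrightarrow> eval S \<theta> pc (Write e1 e2) (S2(l := mem_upd (S2 l) n r)) (V RUnit pc)"
| ELabelOfRef: "eval S \<theta> pc e S1 (V (RRef n l) l')
          \<Longrightarrow> eval S \<theta> pc (LabelOfRef e) S1 (V (RLab l) (sup l l'))"

inductive val_eq :: "'l::lattice \<Rightarrow> 'l val \<Rightarrow> 'l val \<Rightarrow> bool"
  and raw_eq :: "'l::lattice \<Rightarrow> 'l raw \<Rightarrow> 'l raw \<Rightarrow> bool" for A where
  VLow: "\<lbrakk> l \<le> A; raw_eq A r1 r2 \<rbrakk> \<Longrightarrow> val_eq A (V r1 l) (V r2 l)"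
| VHigh: "\<lbrakk> \<not> l1 \<le> A; \<not> l2 \<le> A \<rbrakk> \<Longrightarrow> val_eq A (V r1 l1) (V r2 l2)"
| RUnitEq: "raw_eq A RUnit RUnit"
| RLabEq: "raw_eq A (RLab l) (RLab l)"
| RCloEq: "list_all2 (val_eq A) \<theta>1 \<theta>2 \<Longrightarrow> raw_eq A (RClo e \<theta>1) (RClo e \<theta>2)"
| RInlEq: "val_eq A v1 v2 \<Longrightarrow> raw_eq A (RInl v1) (RInl v2)"
| RInrEq: "val_eq A v1 v2 \<Longrightarrow> raw_eq A (RInr v1) (RInr v2)"
| RPairEq: "\<lbrakk> val_eq A v1 v1'; val_eq A v2 v2' \<rbrakk> \<Longrightarrow> raw_eq A (RPair v1 v2) (RPair v1' v2')"
| RRefLow: "l \<le> A \<Longrightarrow> raw_eq A (RRef n l) (RRef n l)"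
| RRefHigh: "\<lbrakk> \<not> l1 \<le> A; \<not> l2 \<le> A \<rbrakk> \<Longrightarrow> raw_eq A (RRef n1 l1) (RRef n2 l2)"

definition env_eq :: "'l::lattice \<Rightarrow> 'l env \<Rightarrow> 'l env \<Rightarrow> bool" where
  "env_eq A \<theta>1 \<theta>2 = list_all2 (val_eq A) \<theta>1 \<theta>2"

definition mem_eq :: "'l::lattice \<Rightarrow> 'l \<Rightarrow> 'l mem \<Rightarrow> 'l mem \<Rightarrow> bool" where
  "mem_eq A l M1 M2 = (\<not> l \<le> A \<or>
      (length M1 = length M2 \<and> (\<forall>n < length M1. raw_eq A (M1 ! n) (M2 ! n))))"

definition store_eq :: "'l::lattice \<Rightarrow> 'l store \<Rightarrow> 'l store \<Rightarrow> bool" where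
  "store_eq A S1 S2 = (\<forall>l. mem_eq A l (S1 l) (S2 l))"

definition init_cfg_eq :: "'l::lattice \<Rightarrow> 'l store \<times> 'l expr \<Rightarrow> 'l store \<times> 'l expr \<Rightarrow> bool" where
  "init_cfg_eq A c1 c2 = (store_eq A (fst c1) (fst c2) \<and> snd c1 = snd c2)"

definition final_cfg_eq :: "'l::lattice \<Rightarrow> 'l store \<times> 'l val \<Rightarrow> 'l store \<times> 'l val \<Rightarrow> bool" where
  "final_cfg_eq A c1 c2 = (store_eq A (fst c1) (fst c2) \<and> val_eq A (snd c1) (snd c2))"

definition evalc :: "'l::lattice store \<times> 'l expr \<Rightarrow> 'l env \<Rightarrow> 'l \<Rightarrow> 'l store \<times> 'l val \<Rightarrow> bool" where
  "evalc c \<theta> pc c' = eval (fst c) \<theta> pc (snd c) (fst c') (snd c')"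

end

theory Submission
  imports Defs
begin

(* Evaluation under pc returns values labelled above pc and changes the store only at labels
   above pc: New and Write store into the memory at the label of the value resp. reference,
   and that label dominates pc. Hence two runs under secret program counters (not below A),
   even of different expressions under different program counters, leave every visible memory
   untouched and return secret values, so their results are related. This settles the cases in
   which two runs on related inputs branch on a secret: applying a secret closure, a case on a
   secret sum, tainting with a secret label. In all other cases both runs apply the same rule
   to related premises. *)

fun val_label :: "'l val \<Rightarrow> 'l" where
  "val_label (V r l) = l"

lemma val_label_join_val [simp]: "val_label (join_val v l) = sup (val_label v) l"
  by (cases v) simp

lemma eval_pc_le_val_label: "eval S \<theta> pc e S' v \<Longrightarrow> pc \<le> val_label v"
  by (induction rule: eval.induct) (auto intro: le_supI1 order_trans)

lemma eval_store_unchanged: "eval S \<theta> pc e S' v \<Longrightarrow> \<not> pc \<le> l \<Longrightarrow> S' l = S l"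
proof (induction rule: eval.induct)
  case (ETaint S \<theta> pc e1 S1 l0 l' e2 S2 v)
  then have "pc \<le> l0" using eval_pc_le_val_label by fastforce
  with ETaint show ?case by (metis order_trans)
next
  case (ENew S \<theta> pc e S1 r l0 n)
  then have "pc \<le> l0" using eval_pc_le_val_label by fastforce
  with ENew show ?case by auto
next
  case (EWrite S \<theta> pc e1 S1 n l0 l1 e2 S2 r l2)
  then have "pc \<le> l0" using eval_pc_le_val_label by fastforce
  with EWrite show ?case by auto
qed (auto simp: le_sup_iff)

inductive_simps val_eq_V_iff: "val_eq A (V r1 l1) (V r2 l2)"

inductive_simps raw_eq_simps [simp]:
  "raw_eq A RUnit RUnit"
  "raw_eq A (RLab l) (RLab k)"
  "raw_eq A (RClo e \<theta>) (RClo e' \<eta>)"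
  "raw_eq A (RInl v) (RInl w)" "raw_eq A (RInl v) (RInr w)"
  "raw_eq A (RInr v) (RInr w)" "raw_eq A (RInr v) (RInl w)"
  "raw_eq A (RPair v1 v2) (RPair w1 w2)"
  "raw_eq A (RRef n l) (RRef m k)"

lemma val_eq_if_high: "\<not> val_label v \<le> A \<Longrightarrow> \<not> val_label w \<le> A \<Longrightarrow> val_eq A v w"
  by (cases v; cases w) (simp add: val_eq_V_iff)

lemma val_eq_same_label: "raw_eq A r s \<Longrightarrow> val_eq A (V r l) (V s l)"
  by (simp add: val_eq_V_iff)

lemma val_eq_join_val: "val_eq A v w \<Longrightarrow> val_eq A (join_val v l) (join_val w l)"
  by (cases v; cases w) (auto simp: val_eq_V_iff le_sup_iff)

lemma val_eq_join_val_component: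
  assumes "val_eq A (V r l) (V s k)" and "raw_eq A r s \<Longrightarrow> val_eq A v w"
  shows "val_eq A (join_val v l) (join_val w k)"
  using assms val_eq_if_high[of "join_val v l" A "join_val w k"]
  by (auto simp: val_eq_V_iff le_sup_iff intro: val_eq_join_val)

lemma val_eq_compare:
  assumes "val_eq A (V (RLab l1) l1') (V (RLab k1) k1')"
    and "val_eq A (V (RLab l2) l2') (V (RLab k2) k2')"
  shows "val_eq A (V (if l1 \<le> l2 then RInl (V RUnit pc) else RInr (V RUnit pc)) (sup l1' l2'))
                  (V (if k1 \<le> k2 then RInl (V RUnit pc) else RInr (V RUnit pc)) (sup k1' k2'))"
  using assms by (auto simp: val_eq_V_iff le_sup_iff)

lemma store_eq_upd_high:
  "store_eq A S T \<Longrightarrow> \<not> l \<le> A \<Longrightarrow> \<not> k \<le> A \<Longrightarrow> store_eq A (S(l := M)) (T(k := N))"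
  unfolding store_eq_def mem_eq_def by auto

lemma store_eq_mem_upd:
  "store_eq A S T \<Longrightarrow> raw_eq A r s \<Longrightarrow>
   store_eq A (S(l := mem_upd (S l) n r)) (T(l := mem_upd (T l) n s))"
  unfolding store_eq_def mem_eq_def mem_upd_def by (auto simp: nth_append nth_list_update)

lemma eval_high_pc:
  assumes "eval S \<theta> pc e S' v" "eval T \<eta> pc' e' T' w"
    and "\<not> pc \<le> A" "\<not> pc' \<le> A" "store_eq A S T"
  shows "store_eq A S' T' \<and> val_eq A v w"
proof
  have "S' l = S l" "T' l = T l" if "l \<le> A" for l
    using eval_store_unchanged assms(1-4) that by (metis order_trans)+
  with \<open>store_eq A S T\<close> show "store_eq A S' T'"
    unfolding store_eq_def mem_eq_def by metis
  show "val_eq A v w"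
    using eval_pc_le_val_label assms(1-4) by (metis order_trans val_eq_if_high)
qed

inductive_cases eval_AppE: "eval S \<theta> pc (App e1 e2) S' v"
inductive_cases eval_CaseE: "eval S \<theta> pc (Case e e1 e2) S' v"
inductive_cases eval_FstE: "eval S \<theta> pc (Fst e) S' v"
inductive_cases eval_SndE: "eval S \<theta> pc (Snd e) S' v"
inductive_cases eval_LabelOfE: "eval S \<theta> pc (LabelOf e) S' v"
inductive_cases eval_CmpE: "eval S \<theta> pc (Cmp e1 e2) S' v"
inductive_cases eval_TaintE: "eval S \<theta> pc (Taint e1 e2) S' v"
inductive_cases eval_NewE: "eval S \<theta> pc (New e) S' v"
inductive_cases eval_ReadE: "eval S \<theta> pc (Read e) S' v"
inductive_cases eval_WriteE: "eval S \<theta> pc (Write e1 e2) S' v"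
inductive_cases eval_LabelOfRefE: "eval S \<theta> pc (LabelOfRef e) S' v"
inductive_cases eval_simpleE:
  "eval S \<theta> pc (Var x) S' v" "eval S \<theta> pc UnitE S' v" "eval S \<theta> pc (LabE l) S' v"
  "eval S \<theta> pc (Lam e) S' v" "eval S \<theta> pc GetLabel S' v"
  "eval S \<theta> pc (InlE e) S' v" "eval S \<theta> pc (InrE e) S' v"
  "eval S \<theta> pc (PairE e1 e2) S' v"

lemma eval_noninterference:
  assumes "eval S \<theta> pc e S' v" "eval T \<eta> pc e T' w"
    and "env_eq A \<theta> \<eta>" "store_eq A S T"
  shows "store_eq A S' T' \<and> val_eq A v w"
  using assms
proof (induction arbitrary: T \<eta> T' w rule: eval.induct)
  case (EVar x \<theta> S pc)
  then show ?case
    by (auto elim!: eval_simpleE simp: env_eq_def list_all2_conv_all_nth intro: val_eq_join_val)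
next
  case (EApp S \<theta> pc e1 S1 e \<theta>' l e2 S2 v2 S3 v)
  from EApp.prems(1) obtain T1 e' \<eta>' l' T2 w2 where
    callee: "eval T \<eta> pc e1 T1 (V (RClo e' \<eta>') l')" and arg: "eval T1 \<eta> pc e2 T2 w2"
    and body: "eval T2 (w2 # \<eta>') (sup pc l') e' T' w"
    by (rule eval_AppE)
  from EApp.IH(1)[OF callee EApp.prems(2,3)] have "store_eq A S1 T1"
    and clo: "val_eq A (V (RClo e \<theta>') l) (V (RClo e' \<eta>') l')" by auto
  with EApp.IH(2)[OF arg EApp.prems(2)] have "store_eq A S2 T2" "val_eq A v2 w2" by auto
  show ?case
  proof (cases "l \<le> A")
    case True
    with clo have "l' = l" "e' = e" "env_eq A \<theta>' \<eta>'" by (auto simp: val_eq_V_iff env_eq_def)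
    with EApp.IH(3) body \<open>store_eq A S2 T2\<close> \<open>val_eq A v2 w2\<close> show ?thesis
      by (auto simp: env_eq_def)
  next
    case False
    with clo have "\<not> l' \<le> A" by (simp add: val_eq_V_iff)
    with False \<open>store_eq A S2 T2\<close> show ?thesis
      using eval_high_pc[OF EApp.hyps(3) body] by (simp add: le_sup_iff)
  qed
next
  case (ECaseL S \<theta> pc e S1 v1 l e1 S2 v e2)
  from ECaseL.prems(1) obtain T1 r u l' e' where
    scrut: "eval T \<eta> pc e T1 (V r l')" and branch: "eval T1 (u # \<eta>) (sup pc l') e' T' w"
    and tag: "r = RInl u \<and> e' = e1 \<or> r = RInr u \<and> e' = e2"
    by (elim eval_CaseE) blast+
  from ECaseL.IH(1)[OF scrut ECaseL.prems(2,3)] have "store_eq A S1 T1"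
    and sum: "val_eq A (V (RInl v1) l) (V r l')" by auto
  show ?case
  proof (cases "l \<le> A")
    case True
    with sum tag have "l' = l" "e' = e1" "val_eq A v1 u" by (auto simp: val_eq_V_iff)
    with ECaseL.IH(2) branch \<open>store_eq A S1 T1\<close> ECaseL.prems(2) show ?thesis
      by (auto simp: env_eq_def)
  next
    case False
    with sum have "\<not> l' \<le> A" by (simp add: val_eq_V_iff)
    with False \<open>store_eq A S1 T1\<close> show ?thesis
      using eval_high_pc[OF ECaseL.hyps(2) branch] by (simp add: le_sup_iff)
  qed
next
  case (ECaseR S \<theta> pc e S1 v1 l e2 S2 v e1)
  from ECaseR.prems(1) obtain T1 r u l' e' where
    scrut: "eval T \<eta> pc e T1 (V r l')" and branch: "eval T1 (u # \<eta>) (sup pc l') e' T' w"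
    and tag: "r = RInl u \<and> e' = e1 \<or> r = RInr u \<and> e' = e2"
    by (elim eval_CaseE) blast+
  from ECaseR.IH(1)[OF scrut ECaseR.prems(2,3)] have "store_eq A S1 T1"
    and sum: "val_eq A (V (RInr v1) l) (V r l')" by auto
  show ?case
  proof (cases "l \<le> A")
    case True
    with sum tag have "l' = l" "e' = e2" "val_eq A v1 u" by (auto simp: val_eq_V_iff)
    with ECaseR.IH(2) branch \<open>store_eq A S1 T1\<close> ECaseR.prems(2) show ?thesis
      by (auto simp: env_eq_def)
  next
    case False
    with sum have "\<not> l' \<le> A" by (simp add: val_eq_V_iff)
    with False \<open>store_eq A S1 T1\<close> show ?thesis
      using eval_high_pc[OF ECaseR.hyps(2) branch] by (simp add: le_sup_iff)
  qed
next
  case (EFst S \<theta> pc e S1 v1 v2 l)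
  from EFst.prems(1) obtain w1 w2 k where
    pair: "eval T \<eta> pc e T' (V (RPair w1 w2) k)" and "w = join_val w1 k"
    by (rule eval_FstE)
  with EFst.IH[OF pair EFst.prems(2,3)] show ?case by (auto intro!: val_eq_join_val_component)
next
  case (ESnd S \<theta> pc e S1 v1 v2 l)
  from ESnd.prems(1) obtain w1 w2 k where
    pair: "eval T \<eta> pc e T' (V (RPair w1 w2) k)" and "w = join_val w2 k"
    by (rule eval_SndE)
  with ESnd.IH[OF pair ESnd.prems(2,3)] show ?case by (auto intro!: val_eq_join_val_component)
next
  case (ELabelOf S \<theta> pc e S1 r l)
  from ELabelOf.prems(1) obtain s k where
    arg: "eval T \<eta> pc e T' (V s k)" and "w = V (RLab k) k"
    by (rule eval_LabelOfE)
  with ELabelOf.IH[OF arg ELabelOf.prems(2,3)] show ?case by (auto simp: val_eq_V_iff)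
next
  case (ECmpT S \<theta> pc e1 S1 l1 l1' e2 S2 l2 l2')
  from ECmpT.prems(1) obtain T1 k1 k1' k2 k2' where
    lhs: "eval T \<eta> pc e1 T1 (V (RLab k1) k1')" and rhs: "eval T1 \<eta> pc e2 T' (V (RLab k2) k2')"
    and "w = V (if k1 \<le> k2 then RInl (V RUnit pc) else RInr (V RUnit pc)) (sup k1' k2')"
    by (elim eval_CmpE) auto
  with ECmpT.IH(1)[OF lhs ECmpT.prems(2,3)] ECmpT.IH(2)[OF rhs ECmpT.prems(2)] ECmpT.hyps(3)
  show ?case using val_eq_compare[of A l1 l1' k1 k1' l2 l2' k2 k2' pc] by auto
next
  case (ECmpF S \<theta> pc e1 S1 l1 l1' e2 S2 l2 l2')
  from ECmpF.prems(1) obtain T1 k1 k1' k2 k2' where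
    lhs: "eval T \<eta> pc e1 T1 (V (RLab k1) k1')" and rhs: "eval T1 \<eta> pc e2 T' (V (RLab k2) k2')"
    and "w = V (if k1 \<le> k2 then RInl (V RUnit pc) else RInr (V RUnit pc)) (sup k1' k2')"
    by (elim eval_CmpE) auto
  with ECmpF.IH(1)[OF lhs ECmpF.prems(2,3)] ECmpF.IH(2)[OF rhs ECmpF.prems(2)] ECmpF.hyps(3)
  show ?case using val_eq_compare[of A l1 l1' k1 k1' l2 l2' k2 k2' pc] by auto
next
  case (ETaint S \<theta> pc e1 S1 l l' e2 S2 v)
  from ETaint.prems(1) obtain T1 k k' where
    lab: "eval T \<eta> pc e1 T1 (V (RLab k) k')" and "k' \<le> k" and body: "eval T1 \<eta> k e2 T' w"
    by (rule eval_TaintE)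
  from ETaint.IH(1)[OF lab ETaint.prems(2,3)] have "store_eq A S1 T1"
    and labs: "val_eq A (V (RLab l) l') (V (RLab k) k')" by auto
  show ?case
  proof (cases "l \<le> A")
    case True
    with labs \<open>l' \<le> l\<close> have "k = l" by (auto simp: val_eq_V_iff intro: order_trans)
    with ETaint.IH(2) body \<open>store_eq A S1 T1\<close> ETaint.prems(2) show ?thesis by auto
  next
    case False
    with labs \<open>k' \<le> k\<close> have "\<not> k \<le> A" by (auto simp: val_eq_V_iff intro: order_trans)
    with False \<open>store_eq A S1 T1\<close> show ?thesis
      using eval_high_pc[OF ETaint.hyps(3) body] by simp
  qed
next
  case (ENew S \<theta> pc e S1 r l n)
  from ENew.prems(1) obtain T1 s k where
    arg: "eval T \<eta> pc e T1 (V s k)" and T': "T' = T1(k := mem_upd (T1 k) (length (T1 k)) s)"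
    and w: "w = V (RRef (length (T1 k)) k) pc"
    by (rule eval_NewE)
  from ENew.IH[OF arg ENew.prems(2,3)] have "store_eq A S1 T1" and "val_eq A (V r l) (V s k)"
    by auto
  then consider "l \<le> A" "k = l" "raw_eq A r s" | "\<not> l \<le> A" "\<not> k \<le> A"
    by (auto simp: val_eq_V_iff)
  then show ?case
  proof cases
    case 1
    with \<open>store_eq A S1 T1\<close> have "length (T1 l) = length (S1 l)"
      unfolding store_eq_def mem_eq_def by metis
    with 1 T' w ENew.hyps(2) have "T' = T1(l := mem_upd (T1 l) n s)" "w = V (RRef n l) pc"
      by simp_all
    moreover have "store_eq A (S1(l := mem_upd (S1 l) n r)) (T1(l := mem_upd (T1 l) n s))"
      using \<open>store_eq A S1 T1\<close> \<open>raw_eq A r s\<close> by (rule store_eq_mem_upd)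
    moreover from 1 have "raw_eq A (RRef n l) (RRef n l)" by simp
    ultimately show ?thesis by (blast intro: val_eq_same_label)
  next
    case 2
    then have "raw_eq A (RRef n l) (RRef (length (T1 k)) k)" by simp
    with 2 T' w \<open>store_eq A S1 T1\<close> show ?thesis
      by (blast intro: store_eq_upd_high val_eq_same_label)
  qed
next
  case (ERead S \<theta> pc e S1 n l l' r)
  from ERead.prems(1) obtain m k k' where
    ref: "eval T \<eta> pc e T' (V (RRef m k) k')" and "m < length (T' k)"
    and w: "w = V (T' k ! m) (sup k k')"
    by (elim eval_ReadE) auto
  from ERead.IH[OF ref ERead.prems(2,3)] have "store_eq A S1 T'"
    and "val_eq A (V (RRef n l) l') (V (RRef m k) k')" by auto
  then consider "sup l l' \<le> A" "m = n" "k = l" "k' = l'"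
    | "\<not> sup l l' \<le> A" "\<not> sup k k' \<le> A"
    by (auto simp: val_eq_V_iff le_sup_iff)
  then show ?case
  proof cases
    case 1
    with \<open>store_eq A S1 T'\<close> ERead.hyps(2) have "raw_eq A (S1 l ! n) (T' l ! n)"
      unfolding store_eq_def mem_eq_def le_sup_iff by blast
    with 1 w ERead.hyps(3) \<open>store_eq A S1 T'\<close> show ?thesis by (auto intro: val_eq_same_label)
  next
    case 2
    with w ERead.hyps(3) \<open>store_eq A S1 T'\<close> show ?thesis by (auto simp: val_eq_V_iff)
  qed
next
  case (EWrite S \<theta> pc e1 S1 n l l1 e2 S2 r l2)
  from EWrite.prems(1) obtain T1 m k k1 T2 s k2 where
    ref: "eval T \<eta> pc e1 T1 (V (RRef m k) k1)" and "k1 \<le> k"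
    and arg: "eval T1 \<eta> pc e2 T2 (V s k2)" and "k2 \<le> k"
    and T': "T' = T2(k := mem_upd (T2 k) m s)" and w: "w = V RUnit pc"
    by (elim eval_WriteE) auto
  from EWrite.IH(1)[OF ref EWrite.prems(2,3)] have "store_eq A S1 T1"
    and refs: "val_eq A (V (RRef n l) l1) (V (RRef m k) k1)" by auto
  with EWrite.IH(2)[OF arg EWrite.prems(2)] have "store_eq A S2 T2"
    and vals: "val_eq A (V r l2) (V s k2)" by auto
  have "store_eq A (S2(l := mem_upd (S2 l) n r)) T'"
  proof (cases "l \<le> A")
    case True
    with refs vals EWrite.hyps(2,4) have "m = n" "k = l" "raw_eq A r s"
      by (auto simp: val_eq_V_iff intro: order_trans)
    with T' \<open>store_eq A S2 T2\<close> show ?thesis by (auto intro: store_eq_mem_upd)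
  next
    case False
    with refs EWrite.hyps(2) \<open>k1 \<le> k\<close> have "\<not> k \<le> A"
      by (auto simp: val_eq_V_iff intro: order_trans)
    with False T' \<open>store_eq A S2 T2\<close> show ?thesis by (auto intro: store_eq_upd_high)
  qed
  with w show ?case by (blast intro: val_eq_same_label RUnitEq)
next
  case (ELabelOfRef S \<theta> pc e S1 n l l')
  from ELabelOfRef.prems(1) obtain m k k' where
    ref: "eval T \<eta> pc e T' (V (RRef m k) k')" and "w = V (RLab k) (sup k k')"
    by (rule eval_LabelOfRefE)
  with ELabelOfRef.IH[OF ref ELabelOfRef.prems(2,3)] show ?case
    by (auto simp: val_eq_V_iff le_sup_iff)
qed (auto elim!: eval_simpleE intro!: val_eq_same_label simp: env_eq_def)

theorem mainTheorem1:
  fixes A pc :: "'l::lattice"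
    and c1 c2 :: "'l store \<times> 'l expr"
    and \<theta>1 \<theta>2 :: "'l env"
    and c1' c2' :: "'l store \<times> 'l val"
  assumes "evalc c1 \<theta>1 pc c1'"
    and "evalc c2 \<theta>2 pc c2'"
    and "env_eq A \<theta>1 \<theta>2"
    and "init_cfg_eq A c1 c2"
  shows "final_cfg_eq A c1' c2'"
proof -
  from assms(1,2,4) have run1: "eval (fst c1) \<theta>1 pc (snd c1) (fst c1') (snd c1')"
    and run2: "eval (fst c2) \<theta>2 pc (snd c1) (fst c2') (snd c2')"
    and stores: "store_eq A (fst c1) (fst c2)"
    unfolding evalc_def init_cfg_eq_def by auto
  from run1 run2 assms(3) stores show ?thesis
    unfolding final_cfg_eq_def by (rule eval_noninterference)
qed

end
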